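(* Let $f\not\equiv 0$ be an odd entire function such that for all $x,y,z,w\in\mathbb{C}$ $$f(x)f(y)f(z)f(w)-f\Big(\tfrac{x+y+z-w}{2}\Big)f\Big(\tfrac{x+y-z+w}{2}\Big)f\Big(\tfrac{x-y+z+w}{2}\Big)f\Big(\tfrac{-x+y+z+w}{2}\Big)$$ $$-f\Big(\tfrac{x+y+z+w}{2}\Big)f\Big(\tfrac{x+y-z-w}{2}\Big)f\Big(\tfrac{x-y+z-w}{2}\Big)f\Big(\tfrac{x-y-z+w}{2}\Big)=0.$$ Then $f$ satisfies $$(f'(0))^3 f(2z)=f(z)^4\,(\ln f(z))''' \quad\text{for all } z,$$ where $(\ln f)'''$ denotes the meromorphic function $(f'/f)''$; equivalently $(f'(0))^3f(2z)=f^3f'''-3f^2f'f''+2f(f')^3$ with $f=f(z)$. *)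

theory Defs
  imports "HOL-Analysis.Analysis"
begin

end

theory Submission
  imports Defs "HOL-Complex_Analysis.Complex_Analysis"
begin

text \<open>Putting \<open>x = y = z = z + t\<close>, \<open>w = z - t\<close> in the functional equation and using oddness
  gives \<open>f (2z + t) f(t)\<^sup>3 = f(z)\<^sup>3 f(z + 2t) - f(z + t)\<^sup>3 f(z - t)\<close>. Differentiating three
  times in \<open>t\<close> at \<open>t = 0\<close>: since \<open>f(0) = 0\<close>, the left side contributes only
  \<open>6 f(2z) f'(0)\<^sup>3\<close>, and the right side is \<open>6 (f\<^sup>3 f''' - 3 f\<^sup>2 f' f'' + 2 f f'\<^sup>3)\<close> at \<open>z\<close>.\<close>

lemma holomorphic_on_compose_entire:
  assumes "f holomorphic_on UNIV" "g holomorphic_on S"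
  shows "(\<lambda>w. f (g w)) holomorphic_on S"
  using holomorphic_on_compose[OF assms(2) holomorphic_on_subset[OF assms(1)]]
  by (simp add: o_def)

lemma higher_deriv_compose_affine:
  assumes "f holomorphic_on UNIV"
  shows "(deriv ^^ n) (\<lambda>w. f (u * w + c)) z = u ^ n * (deriv ^^ n) f (u * z + c)"
  by (rule higher_deriv_compose_linear'[OF assms open_UNIV open_UNIV]) auto

lemma higher_deriv_mult_upto3:
  fixes g h :: "complex \<Rightarrow> complex"
  assumes "g holomorphic_on S" "h holomorphic_on S" "open S" "x \<in> S"
  shows "deriv (\<lambda>w. g w * h w) x = deriv g x * h x + g x * deriv h x"
    and "(deriv ^^ 2) (\<lambda>w. g w * h w) x =
           (deriv ^^ 2) g x * h x + 2 * deriv g x * deriv h x + g x * (deriv ^^ 2) h x"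
    and "(deriv ^^ 3) (\<lambda>w. g w * h w) x =
           (deriv ^^ 3) g x * h x + 3 * (deriv ^^ 2) g x * deriv h x
           + 3 * deriv g x * (deriv ^^ 2) h x + g x * (deriv ^^ 3) h x"
  using higher_deriv_mult[OF assms, of 1] higher_deriv_mult[OF assms, of 2]
    higher_deriv_mult[OF assms, of 3]
  by (simp_all add: numeral_3_eq_3 numeral_2_eq_2 algebra_simps)

lemma higher_deriv_cube_upto3:
  fixes g :: "complex \<Rightarrow> complex"
  assumes g: "g holomorphic_on S" and S: "open S" "x \<in> S"
  shows "deriv (\<lambda>w. g w ^ 3) x = 3 * g x ^ 2 * deriv g x"
    and "(deriv ^^ 2) (\<lambda>w. g w ^ 3) x = 3 * g x ^ 2 * (deriv ^^ 2) g x + 6 * g x * deriv g x ^ 2"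
    and "(deriv ^^ 3) (\<lambda>w. g w ^ 3) x =
           3 * g x ^ 2 * (deriv ^^ 3) g x + 18 * g x * deriv g x * (deriv ^^ 2) g x
           + 6 * deriv g x ^ 3"
  using higher_deriv_mult_upto3[OF g holomorphic_on_mult[OF g g] S] higher_deriv_mult_upto3[OF g g S]
  unfolding power3_eq_cube mult.assoc
  by (simp_all add: algebra_simps power2_eq_square)

lemma higher_deriv3_mult_cube_at_root:
  fixes g h :: "complex \<Rightarrow> complex"
  assumes g: "g holomorphic_on S" and h: "h holomorphic_on S" and S: "open S" "x \<in> S"
    and root: "h x = 0"
  shows "(deriv ^^ 3) (\<lambda>w. g w * h w ^ 3) x = 6 * g x * deriv h x ^ 3"
proof -
  have "(\<lambda>w. h w ^ 3) holomorphic_on S"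
    using h by (intro holomorphic_intros)
  then show ?thesis
    using higher_deriv_mult_upto3(3)[OF g _ S] higher_deriv_cube_upto3[OF h S] root
    by simp
qed

lemma higher_deriv3_cube_mult_reflected:
  fixes f :: "complex \<Rightarrow> complex"
  assumes f: "f holomorphic_on UNIV"
  shows "(deriv ^^ 3) (\<lambda>t. f (z + t) ^ 3 * f (z - t)) 0 =
           2 * f z ^ 3 * (deriv ^^ 3) f z + 18 * f z ^ 2 * deriv f z * (deriv ^^ 2) f z
           - 12 * f z * deriv f z ^ 3"
proof -
  define P where "P = (\<lambda>t. f (1 * t + z))"
  define N where "N = (\<lambda>t. f ((- 1) * t + z))"
  have hP: "P holomorphic_on UNIV" and hN: "N holomorphic_on UNIV"
    unfolding P_def N_def by (intro holomorphic_on_compose_entire[OF f] holomorphic_intros)+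
  have hP3: "(\<lambda>t. P t ^ 3) holomorphic_on UNIV"
    using hP by (intro holomorphic_intros)
  have dP: "(deriv ^^ n) P 0 = (deriv ^^ n) f z" for n
    unfolding P_def higher_deriv_compose_affine[OF f] by simp
  have dN: "(deriv ^^ n) N 0 = (- 1) ^ n * (deriv ^^ n) f z" for n
    unfolding N_def higher_deriv_compose_affine[OF f] by simp
  have "(\<lambda>t. f (z + t) ^ 3 * f (z - t)) = (\<lambda>t. P t ^ 3 * N t)"
    unfolding P_def N_def by (simp add: add.commute)
  then show ?thesis
    using higher_deriv_mult_upto3(3)[OF hP3 hN open_UNIV UNIV_I]
      higher_deriv_cube_upto3[OF hP open_UNIV UNIV_I]
      dP[of 0] dP[of 1] dP[of 2] dP[of 3] dN[of 0] dN[of 1] dN[of 2] dN[of 3]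
    by (simp add: numeral_3_eq_3 numeral_2_eq_2 algebra_simps power2_eq_square)
qed

lemma odd_solution_shift_identity:
  fixes f :: "complex \<Rightarrow> complex"
  assumes odd: "\<And>z. f (- z) = - f z"
    and feq: "\<And>x y z w.
      f x * f y * f z * f w
      - f ((x + y + z - w) / 2) * f ((x + y - z + w) / 2) * f ((x - y + z + w) / 2) * f ((- x + y + z + w) / 2)
      - f ((x + y + z + w) / 2) * f ((x + y - z - w) / 2) * f ((x - y + z - w) / 2) * f ((x - y - z + w) / 2) = 0"
  shows "f (2 * z + t) * f t ^ 3 = f z ^ 3 * f (z + 2 * t) - f (z + t) ^ 3 * f (z - t)"
proof -
  have args: "(z + t + (z + t) + (z + t) - (z - t)) / 2 = z + 2 * t"
    "(z + t + (z + t) - (z + t) + (z - t)) / 2 = z"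
    "(z + t - (z + t) + (z + t) + (z - t)) / 2 = z"
    "(- (z + t) + (z + t) + (z + t) + (z - t)) / 2 = z"
    "(z + t + (z + t) + (z + t) + (z - t)) / 2 = 2 * z + t"
    "(z + t + (z + t) - (z + t) - (z - t)) / 2 = t"
    "(z + t - (z + t) + (z + t) - (z - t)) / 2 = t"
    "(z + t - (z + t) - (z + t) + (z - t)) / 2 = - t"
    by (simp_all add: field_simps)
  show ?thesis
    using feq[of "z + t" "z + t" "z + t" "z - t"] unfolding args
    by (simp add: odd algebra_simps power3_eq_cube)
qed

theorem lemma4:
  fixes f :: "complex \<Rightarrow> complex"
  assumes entire: "f holomorphic_on UNIV"
    and odd: "\<And>z. f (- z) = - f z"
    and nonzero: "\<exists>z. f z \<noteq> 0"
    and feq: "\<And>x y z w.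
      f x * f y * f z * f w
      - f ((x + y + z - w) / 2) * f ((x + y - z + w) / 2) * f ((x - y + z + w) / 2) * f ((- x + y + z + w) / 2)
      - f ((x + y + z + w) / 2) * f ((x + y - z - w) / 2) * f ((x - y + z - w) / 2) * f ((x - y - z + w) / 2) = 0"
  shows "\<And>z. (deriv f 0) ^ 3 * f (2 * z) =
      f z ^ 3 * (deriv ^^ 3) f z - 3 * f z ^ 2 * deriv f z * (deriv ^^ 2) f z
      + 2 * f z * (deriv f z) ^ 3"
proof -
  fix z :: complex
  have f0: "f 0 = 0"
    using odd[of 0] by simp
  have hA: "(\<lambda>t. f (2 * z + t)) holomorphic_on UNIV"
    and hC: "(\<lambda>t. f (2 * t + z)) holomorphic_on UNIV"
    and hPN: "(\<lambda>t. f (z + t) ^ 3 * f (z - t)) holomorphic_on UNIV"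
    by (intro holomorphic_on_compose_entire[OF entire] holomorphic_intros)+
  have hkC: "(\<lambda>t. f z ^ 3 * f (2 * t + z)) holomorphic_on UNIV"
    using hC by (intro holomorphic_intros)
  have "(\<lambda>t. f (2 * z + t) * f t ^ 3) =
      (\<lambda>t. f z ^ 3 * f (2 * t + z) - f (z + t) ^ 3 * f (z - t))"
    using odd_solution_shift_identity[OF odd feq, of z] by (simp add: add.commute)
  then have "6 * f (2 * z) * deriv f 0 ^ 3 =
      f z ^ 3 * (deriv ^^ 3) (\<lambda>t. f (2 * t + z)) 0 - (deriv ^^ 3) (\<lambda>t. f (z + t) ^ 3 * f (z - t)) 0"
    using higher_deriv3_mult_cube_at_root[OF hA entire open_UNIV UNIV_I f0]
      higher_deriv_diff[OF hkC hPN open_UNIV UNIV_I, of 3]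
      higher_deriv_cmult[OF hC UNIV_I open_UNIV, of 3 "f z ^ 3"]
    by simp
  also have "\<dots> = 6 * (f z ^ 3 * (deriv ^^ 3) f z - 3 * f z ^ 2 * deriv f z * (deriv ^^ 2) f z
      + 2 * f z * (deriv f z) ^ 3)"
    unfolding higher_deriv3_cube_mult_reflected[OF entire] higher_deriv_compose_affine[OF entire]
    by (simp add: algebra_simps)
  finally have "6 * ((deriv f 0) ^ 3 * f (2 * z)) =
      6 * (f z ^ 3 * (deriv ^^ 3) f z - 3 * f z ^ 2 * deriv f z * (deriv ^^ 2) f z
      + 2 * f z * (deriv f z) ^ 3)"
    by (simp only: mult_ac)
  then show "(deriv f 0) ^ 3 * f (2 * z) =
      f z ^ 3 * (deriv ^^ 3) f z - 3 * f z ^ 2 * deriv f z * (deriv ^^ 2) f z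
      + 2 * f z * (deriv f z) ^ 3"
    by (subst (asm) mult_cancel_left) simp
qed

end
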